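(* For every $Q\in\mathcal{P}$ and every $v>0$, $$D^*(v,Q)=\inf\{D(P\Vert Q): P\in\mathcal{P},\ V(P,Q)=v\}.$$
   Context: Let $(\Omega,\mathcal{F},\mu)$ be a finite or $\sigma$-finite measure space, and let $\mathcal{P}$ be the set of probability measures on $(\Omega,\mathcal{F})$ absolutely continuous with respect to $\mu$. For $P,Q\in\mathcal{P}$ the lower-case letters $p,q$ denote their densities with respect to $\mu$. The Kullback–Leibler divergence is $D(P\Vert Q)=\int\ln\frac{dP}{dQ}\,dP$ if $P\ll Q$, and $+\infty$ otherwise. The total variation distance is $V(P,Q)=\int_\Omega|p-q|\,d\mu$. For $v>0$ define $D^*(v,Q)=\inf\{D(P\Vert Q):P\in\mathcal{P},\ V(P,Q)\ge v\}$. All infima over empty sets equal $+\infty$. *)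

theory Defs
  imports "HOL-Probability.Probability"
begin

definition Pset :: "'a measure \<Rightarrow> 'a measure set" where
  "Pset M = {P. sets P = sets M \<and> prob_space P \<and> absolutely_continuous M P}"

definition TV :: "'a measure \<Rightarrow> 'a measure \<Rightarrow> 'a measure \<Rightarrow> real" where
  "TV M P Q = (\<integral>x. \<bar>enn2real (RN_deriv M P x) - enn2real (RN_deriv M Q x)\<bar> \<partial>M)"

text \<open>Kullback-Leibler divergence D(P||Q) = integral of ln(dP/dQ) dP if P << Q,
  and +infinity otherwise.  (The negative part of ln(dP/dQ) is always
  P-integrable, so a non-integrable log-likelihood ratio means D = +infinity.)\<close>
definition KL :: "'a measure \<Rightarrow> 'a measure \<Rightarrow> ereal" where
  "KL P Q = (if absolutely_continuous Q P \<and>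
                 integrable P (\<lambda>x. ln (enn2real (RN_deriv Q P x)))
             then ereal (\<integral>x. ln (enn2real (RN_deriv Q P x)) \<partial>P)
             else \<infinity>)"

definition Dstar :: "'a measure \<Rightarrow> real \<Rightarrow> 'a measure \<Rightarrow> ereal" where
  "Dstar M v Q = Inf {KL P Q | P. P \<in> Pset M \<and> TV M P Q \<ge> v}"

end

theory Submission
  imports Defs
begin

text \<open>
  The inequality \<open>Dstar M v Q \<le> Inf {KL P Q | P. \<dots> TV M P Q = v}\<close> is immediate, because the
  constraint set on the left is larger.  For the converse it suffices to show: if \<open>P\<close> has
  finite divergence from \<open>Q\<close> and \<open>V(P,Q) \<ge> v\<close>, then some \<open>P'\<close> has \<open>V(P',Q) = v\<close> and
  \<open>D(P'\<Vert>Q) \<le> D(P\<Vert>Q)\<close>.  We take the mixture \<open>P' = t P + (1 - t) Q\<close> with \<open>t = v / V(P,Q)\<close>.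
  Writing \<open>r = dP/dQ\<close>, its density w.r.t. \<open>Q\<close> is \<open>t r + 1 - t\<close>, so
   \<^item> \<open>V(P',Q) = \<integral> q \<bar>(t r + 1 - t) - 1\<bar> d\<mu> = t V(P,Q) = v\<close>, and
   \<^item> \<open>D(P'\<Vert>Q) = \<integral> \<phi>(t r + 1 - t) dQ \<le> t \<integral> \<phi>(r) dQ \<le> D(P\<Vert>Q)\<close> for \<open>\<phi>(x) = x ln x\<close>,
     by convexity of \<open>\<phi>\<close>, \<open>\<phi>(1) = 0\<close>, and \<open>D(P\<Vert>Q) \<ge> 0\<close>.
\<close>

section \<open>Convexity of \<open>x ln x\<close>\<close>

lemma xlnx_above_tangent:
  fixes y z :: real
  assumes "0 < y" "0 \<le> z"
  shows "y * ln y + (ln y + 1) * (z - y) \<le> z * ln z"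
proof (cases "z = 0")
  case True
  with assms show ?thesis by simp
next
  case False
  with assms have z: "z > 0" by simp
  have "ln y - ln z \<le> y / z - 1"
    using ln_le_minus_one[of "y / z"] assms z by (simp add: ln_div)
  hence "z * (ln y - ln z) \<le> y - z"
    using z mult_left_mono[of _ _ z] by (simp add: field_simps)
  thus ?thesis by (simp add: algebra_simps)
qed

text \<open>The tangent at \<open>1\<close>: this is what makes relative entropy nonnegative.\<close>
lemma xlnx_ge_minus_one: "0 \<le> (x::real) \<Longrightarrow> x - 1 \<le> x * ln x"
  using xlnx_above_tangent[of 1 x] by simp

text \<open>Jensen's inequality for mixing a point \<open>r\<close> with the point \<open>1\<close>, where \<open>1 ln 1 = 0\<close>.\<close>
lemma xlnx_mix_with_one:
  fixes t r :: real
  assumes "0 \<le> t" "t \<le> 1" "0 \<le> r"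
  shows "(t * r + 1 - t) * ln (t * r + 1 - t) \<le> t * (r * ln r)"
proof (cases "t = 1")
  case True
  then show ?thesis by simp
next
  case False
  define y where "y = t * r + 1 - t"
  have y: "0 < y"
    using assms False mult_nonneg_nonneg[of t r] unfolding y_def by linarith
  have "t * (y * ln y + (ln y + 1) * (r - y)) + (1 - t) * (y * ln y + (ln y + 1) * (1 - y))
          \<le> t * (r * ln r) + (1 - t) * (1 * ln 1)"
    using assms xlnx_above_tangent[OF y assms(3)] xlnx_above_tangent[OF y, of 1]
    by (intro add_mono mult_left_mono) auto
  moreover have "t * (y * ln y + (ln y + 1) * (r - y)) + (1 - t) * (y * ln y + (ln y + 1) * (1 - y))
                   = y * ln y"
    unfolding y_def by (simp add: algebra_simps)
  ultimately show ?thesis unfolding y_def by simp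
qed

section \<open>Measures given by densities\<close>

text \<open>An absolutely continuous measure is the density of its real-valued Radon-Nikodym
  derivative (the derivative is finite almost everywhere).\<close>
lemma density_real_RN_deriv:
  assumes "sigma_finite_measure Q" "sigma_finite_measure P"
    and "absolutely_continuous Q P" "sets P = sets Q"
  shows "P = density Q (\<lambda>x. ennreal (enn2real (RN_deriv Q P x)))"
proof -
  interpret Q: sigma_finite_measure Q by fact
  have "P = density Q (RN_deriv Q P)"
    using Q.density_RN_deriv assms by simp
  also have "\<dots> = density Q (\<lambda>x. ennreal (enn2real (RN_deriv Q P x)))"
  proof (rule density_cong)
    from Q.RN_deriv_finite[OF assms(2-4)]
    show "AE x in Q. RN_deriv Q P x = ennreal (enn2real (RN_deriv Q P x))"
      by eventually_elim (auto simp: less_top)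
  qed auto
  finally show ?thesis .
qed

lemma real_RN_deriv_density:
  assumes "sigma_finite_measure M"
    and g[measurable]: "g \<in> borel_measurable M" and g_nn: "\<And>x. x \<in> space M \<Longrightarrow> 0 \<le> g x"
  shows "AE x in M. enn2real (RN_deriv M (density M (\<lambda>x. ennreal (g x))) x) = g x"
proof -
  interpret M: sigma_finite_measure M by fact
  have "AE x in M. ennreal (g x) = RN_deriv M (density M (\<lambda>x. ennreal (g x))) x"
    by (rule M.RN_deriv_unique) auto
  then show ?thesis
  proof (rule AE_mp, intro AE_I2 impI)
    fix x assume "x \<in> space M" "ennreal (g x) = RN_deriv M (density M (\<lambda>x. ennreal (g x))) x"
    then show "enn2real (RN_deriv M (density M (\<lambda>x. ennreal (g x))) x) = g x"
      using g_nn[of x] by (metis enn2real_ennreal)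
  qed
qed

lemma KL_density:
  assumes "prob_space Q"
    and g[measurable]: "g \<in> borel_measurable Q" and g_nn: "\<And>x. x \<in> space Q \<Longrightarrow> 0 \<le> g x"
  shows "KL (density Q (\<lambda>x. ennreal (g x))) Q =
    (if integrable Q (\<lambda>x. g x * ln (g x)) then ereal (\<integral>x. g x * ln (g x) \<partial>Q) else \<infinity>)"
proof -
  interpret Q: prob_space Q by fact
  let ?P = "density Q (\<lambda>x. ennreal (g x))"
  have ac: "absolutely_continuous Q ?P"
    by (rule absolutely_continuousI_density) simp
  have "AE x in Q. ln (enn2real (RN_deriv Q ?P x)) = ln (g x)"
    using real_RN_deriv_density[OF Q.sigma_finite_measure_axioms g g_nn]
    by (rule eventually_mono) simp_all
  hence ae: "AE x in ?P. ln (enn2real (RN_deriv Q ?P x)) = ln (g x)"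
    by (rule absolutely_continuous_AE[OF _ ac, rotated]) simp
  have "integrable ?P (\<lambda>x. ln (enn2real (RN_deriv Q ?P x))) \<longleftrightarrow> integrable ?P (\<lambda>x. ln (g x))"
    by (rule integrable_cong_AE) (use ae in auto)
  also have "\<dots> \<longleftrightarrow> integrable Q (\<lambda>x. g x * ln (g x))"
    using g_nn by (subst integrable_density) auto
  finally have int_iff: "integrable ?P (\<lambda>x. ln (enn2real (RN_deriv Q ?P x)))
                          \<longleftrightarrow> integrable Q (\<lambda>x. g x * ln (g x))" .
  have "(\<integral>x. ln (enn2real (RN_deriv Q ?P x)) \<partial>?P) = (\<integral>x. ln (g x) \<partial>?P)"
    by (rule integral_cong_AE) (use ae in auto)
  also have "\<dots> = (\<integral>x. g x * ln (g x) \<partial>Q)"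
    using g_nn by (subst integral_density) auto
  finally show ?thesis
    unfolding KL_def using ac int_iff by simp
qed

lemma TV_density:
  assumes M: "sigma_finite_measure M" and Q_def: "Q = density M (\<lambda>x. ennreal (q x))"
    and q[measurable]: "q \<in> borel_measurable M" and q_nn: "\<And>x. 0 \<le> q x"
    and g[measurable]: "g \<in> borel_measurable M" and g_nn: "\<And>x. 0 \<le> g x"
  shows "TV M (density Q (\<lambda>x. ennreal (g x))) Q = (\<integral>x. q x * \<bar>g x - 1\<bar> \<partial>M)"
proof -
  have gQ: "density Q (\<lambda>x. ennreal (g x)) = density M (\<lambda>x. ennreal (q x * g x))"
    unfolding Q_def using q_nn g_nn by (subst density_density_eq) (auto simp: ennreal_mult)
  have "AE x in M. enn2real (RN_deriv M (density Q (\<lambda>x. ennreal (g x))) x) = q x * g x"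
    unfolding gQ using q_nn g_nn by (intro real_RN_deriv_density[OF M]) auto
  moreover have "AE x in M. enn2real (RN_deriv M Q x) = q x"
    unfolding Q_def using q_nn by (intro real_RN_deriv_density[OF M]) auto
  moreover have "\<bar>q x * g x - q x\<bar> = q x * \<bar>g x - 1\<bar>" for x
    using q_nn[of x] by (metis abs_mult abs_of_nonneg mult.right_neutral right_diff_distrib)
  ultimately show ?thesis
    unfolding TV_def by (intro integral_cong_AE) (auto elim!: AE_mp)
qed

lemma density_in_Pset:
  assumes Q: "Q \<in> Pset M"
    and g[measurable]: "g \<in> borel_measurable Q" and g_nn: "\<And>x. 0 \<le> g x"
    and g_int: "integrable Q g" and g_one: "(\<integral>x. g x \<partial>Q) = 1"
  shows "density Q (\<lambda>x. ennreal (g x)) \<in> Pset M"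
proof -
  let ?P = "density Q (\<lambda>x. ennreal (g x))"
  have "emeasure ?P (space ?P) = (\<integral>\<^sup>+x. ennreal (g x) * indicator (space Q) x \<partial>Q)"
    by (subst emeasure_density) auto
  also have "\<dots> = (\<integral>\<^sup>+x. ennreal (g x) \<partial>Q)"
    by (rule nn_integral_cong) simp
  also have "\<dots> = 1"
    using g_int g_one g_nn by (simp add: nn_integral_eq_integral)
  finally have "prob_space ?P"
    by (rule prob_spaceI)
  moreover have "absolutely_continuous Q ?P"
    by (rule absolutely_continuousI_density) simp
  ultimately show ?thesis
    using Q unfolding Pset_def absolutely_continuous_def by auto
qed

lemma finite_KL_density:
  assumes "prob_space Q" "prob_space P" "sets P = sets Q" "KL P Q \<noteq> \<infinity>"
  obtains r where "r \<in> borel_measurable Q" "\<And>x. 0 \<le> r x"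
    and "P = density Q (\<lambda>x. ennreal (r x))"
    and "integrable Q r" "(\<integral>x. r x \<partial>Q) = 1"
    and "integrable Q (\<lambda>x. r x * ln (r x))" "KL P Q = ereal (\<integral>x. r x * ln (r x) \<partial>Q)"
proof
  interpret P: prob_space P by fact
  define r where "r x = enn2real (RN_deriv Q P x)" for x
  show r[measurable]: "r \<in> borel_measurable Q" and r_nn: "\<And>x. 0 \<le> r x"
    unfolding r_def by simp_all
  have "absolutely_continuous Q P"
    using assms(4) by (auto simp: KL_def split: if_splits)
  then show P_def: "P = density Q (\<lambda>x. ennreal (r x))"
    unfolding r_def using assms
    by (intro density_real_RN_deriv) (auto intro: prob_space_imp_sigma_finite)
  have "integrable P (\<lambda>_. 1::real)"
    by simp
  then show "integrable Q r"
    using r_nn by (subst (asm) P_def, subst (asm) integrable_density) auto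
  have "(\<integral>x. 1 \<partial>P) = (1::real)"
    by (simp add: P.prob_space)
  then show "(\<integral>x. r x \<partial>Q) = 1"
    using r_nn by (subst (asm) P_def, subst (asm) integral_density) auto
  have "KL P Q = (if integrable Q (\<lambda>x. r x * ln (r x)) then ereal (\<integral>x. r x * ln (r x) \<partial>Q) else \<infinity>)"
    by (subst P_def, rule KL_density) (use assms(1) r_nn in auto)
  then show "integrable Q (\<lambda>x. r x * ln (r x))" "KL P Q = ereal (\<integral>x. r x * ln (r x) \<partial>Q)"
    using assms(4) by (auto split: if_splits)
qed

section \<open>Mixing with the reference measure\<close>

text \<open>Replacing a normalized density \<open>r\<close> by \<open>g = t r + 1 - t\<close> does not increase the entropy
  \<open>\<integral> r ln r\<close>: convexity gives \<open>\<integral> g ln g \<le> t \<integral> r ln r\<close>, and \<open>\<integral> r ln r \<ge> \<integral> (r - 1) = 0\<close>.\<close>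
lemma entropy_mixture_le:
  fixes t :: real and r :: "'a \<Rightarrow> real"
  assumes "prob_space Q" "0 \<le> t" "t \<le> 1"
    and r[measurable]: "r \<in> borel_measurable Q" and r_nn: "\<And>x. 0 \<le> r x"
    and r_int: "integrable Q r" and r_one: "(\<integral>x. r x \<partial>Q) = 1"
    and ent_int: "integrable Q (\<lambda>x. r x * ln (r x))"
  defines "g \<equiv> \<lambda>x. t * r x + 1 - t"
  shows "integrable Q (\<lambda>x. g x * ln (g x))"
    and "(\<integral>x. g x * ln (g x) \<partial>Q) \<le> (\<integral>x. r x * ln (r x) \<partial>Q)"
proof -
  interpret Q: prob_space Q by fact
  have upper: "g x * ln (g x) \<le> t * (r x * ln (r x))" for x
    unfolding g_def by (rule xlnx_mix_with_one) (use assms(2,3) r_nn in auto)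
  have g_nn: "0 \<le> g x" for x
    unfolding g_def using assms r_nn[of x] mult_nonneg_nonneg[of t "r x"] by linarith
  have bound: "norm (g x * ln (g x)) \<le> norm (\<bar>r x * ln (r x)\<bar> + 1)" for x
  proof -
    have "\<bar>t * (r x * ln (r x))\<bar> \<le> \<bar>r x * ln (r x)\<bar>"
      using assms(2,3) by (simp add: abs_mult mult_left_le_one_le)
    then show ?thesis
      using upper[of x] xlnx_ge_minus_one[OF g_nn[of x]] g_nn[of x] by auto
  qed
  show g_ent_int: "integrable Q (\<lambda>x. g x * ln (g x))"
    by (rule Bochner_Integration.integrable_bound[of _ "\<lambda>x. \<bar>r x * ln (r x)\<bar> + 1"])
      (use ent_int bound in \<open>auto simp: g_def intro!: AE_I2\<close>)
  have "0 = (\<integral>x. r x - 1 \<partial>Q)"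
    using r_int r_one by (simp add: Q.prob_space)
  also have "\<dots> \<le> (\<integral>x. r x * ln (r x) \<partial>Q)"
    by (rule integral_mono) (auto simp: r_int ent_int intro!: xlnx_ge_minus_one r_nn)
  finally have ent_nn: "0 \<le> (\<integral>x. r x * ln (r x) \<partial>Q)" .
  have "(\<integral>x. g x * ln (g x) \<partial>Q) \<le> (\<integral>x. t * (r x * ln (r x)) \<partial>Q)"
    by (rule integral_mono) (use g_ent_int ent_int upper in auto)
  also have "\<dots> = t * (\<integral>x. r x * ln (r x) \<partial>Q)"
    by simp
  also have "\<dots> \<le> (\<integral>x. r x * ln (r x) \<partial>Q)"
    using ent_nn assms(2,3) by (simp add: mult_left_le_one_le)
  finally show "(\<integral>x. g x * ln (g x) \<partial>Q) \<le> (\<integral>x. r x * ln (r x) \<partial>Q)" .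
qed

lemma shrink_TV_to:
  assumes M: "sigma_finite_measure M" and Q: "Q \<in> Pset M" and P: "P \<in> Pset M"
    and v: "0 < v" "v \<le> TV M P Q" and KL_fin: "KL P Q \<noteq> \<infinity>"
  shows "\<exists>P'. P' \<in> Pset M \<and> TV M P' Q = v \<and> KL P' Q \<le> KL P Q"
proof -
  have sets_Q: "sets Q = sets M" and Q_prob: "prob_space Q" and "absolutely_continuous M Q"
    using Q by (auto simp: Pset_def)
  interpret Q: prob_space Q by fact
  define q where "q x = enn2real (RN_deriv M Q x)" for x
  have q[measurable]: "q \<in> borel_measurable M" and q_nn: "\<And>x. 0 \<le> q x"
    unfolding q_def by simp_all
  have Q_def: "Q = density M (\<lambda>x. ennreal (q x))"
    unfolding q_def using \<open>absolutely_continuous M Q\<close> sets_Q M prob_space_imp_sigma_finite[OF Q_prob]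
    by (intro density_real_RN_deriv) auto
  obtain r where r[measurable]: "r \<in> borel_measurable Q" and r_nn: "\<And>x. 0 \<le> r x"
    and P_def: "P = density Q (\<lambda>x. ennreal (r x))"
    and r_int: "integrable Q r" and r_one: "(\<integral>x. r x \<partial>Q) = 1"
    and ent_int: "integrable Q (\<lambda>x. r x * ln (r x))"
    and KL_P: "KL P Q = ereal (\<integral>x. r x * ln (r x) \<partial>Q)"
    using finite_KL_density[OF Q_prob _ _ KL_fin] P sets_Q by (auto simp: Pset_def)
  have rM[measurable]: "r \<in> borel_measurable M"
    using r measurable_cong_sets[OF sets_Q refl] by blast
  define t where "t = v / TV M P Q"
  have t: "0 < t" "t \<le> 1"
    using v unfolding t_def by simp_all
  define g where "g x = t * r x + 1 - t" for x
  have g_nn: "0 \<le> g x" for x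
    unfolding g_def using t r_nn[of x] mult_nonneg_nonneg[of t "r x"] by linarith
  have g[measurable]: "g \<in> borel_measurable M"
    unfolding g_def by simp
  define P' where "P' = density Q (\<lambda>x. ennreal (g x))"
  have "P' \<in> Pset M"
    unfolding P'_def using Q g_nn r_int r_one
    by (intro density_in_Pset) (auto simp: g_def Q.prob_space)
  moreover have "TV M P' Q = v"
  proof -
    have "TV M P' Q = (\<integral>x. q x * \<bar>g x - 1\<bar> \<partial>M)"
      unfolding P'_def by (rule TV_density[OF M Q_def q q_nn g g_nn])
    also have "\<dots> = (\<integral>x. t * (q x * \<bar>r x - 1\<bar>) \<partial>M)"
    proof (rule Bochner_Integration.integral_cong[OF refl])
      fix x
      have "g x - 1 = t * (r x - 1)"
        unfolding g_def by (simp add: algebra_simps)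
      then show "q x * \<bar>g x - 1\<bar> = t * (q x * \<bar>r x - 1\<bar>)"
        using t by (simp add: abs_mult)
    qed
    also have "\<dots> = t * TV M P Q"
      unfolding P_def TV_density[OF M Q_def q q_nn rM r_nn] by simp
    finally show ?thesis
      using v unfolding t_def by simp
  qed
  moreover have "KL P' Q \<le> KL P Q"
  proof -
    have ent_g: "integrable Q (\<lambda>x. g x * ln (g x))"
      "(\<integral>x. g x * ln (g x) \<partial>Q) \<le> (\<integral>x. r x * ln (r x) \<partial>Q)"
      using entropy_mixture_le[OF Q_prob _ _ r r_nn r_int r_one ent_int] t
      unfolding g_def by auto
    have "g \<in> borel_measurable Q"
      using g measurable_cong_sets[OF sets_Q refl] by blast
    then have "KL P' Q = ereal (\<integral>x. g x * ln (g x) \<partial>Q)"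
      unfolding P'_def using KL_density[OF Q_prob _ g_nn] ent_g(1) by simp
    then show ?thesis
      using ent_g(2) KL_P by simp
  qed
  ultimately show ?thesis
    by blast
qed

theorem lemma2:
  fixes M :: "'a measure" and Q :: "'a measure" and v :: real
  assumes "sigma_finite_measure M"
    and "Q \<in> Pset M"
    and "v > 0"
  shows "Dstar M v Q = Inf {KL P Q | P. P \<in> Pset M \<and> TV M P Q = v}"
proof (rule antisym)
  show "Dstar M v Q \<le> Inf {KL P Q | P. P \<in> Pset M \<and> TV M P Q = v}"
    unfolding Dstar_def by (rule Inf_superset_mono) auto
  show "Inf {KL P Q | P. P \<in> Pset M \<and> TV M P Q = v} \<le> Dstar M v Q"
    unfolding Dstar_def
  proof (rule Inf_greatest, clarify)
    fix P assume P: "P \<in> Pset M" "v \<le> TV M P Q"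
    show "Inf {KL P Q | P. P \<in> Pset M \<and> TV M P Q = v} \<le> KL P Q"
    proof (cases "KL P Q = \<infinity>")
      case False
      then obtain P' where "P' \<in> Pset M" "TV M P' Q = v" "KL P' Q \<le> KL P Q"
        using shrink_TV_to[OF assms(1,2) P(1) assms(3) P(2)] by blast
      then show ?thesis
        by (intro Inf_lower2[of "KL P' Q"]) auto
    qed simp
  qed
qed

end
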